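(* Let $\alpha:(0,\infty)\to[0,\infty)$ be a differentiable interaction potential and let $F:\mathbb R^6\to(0,\infty)$ be a smooth positive function of $(v,w)\in\mathbb R^3\times\mathbb R^3$ (with enough decay for the integrals below to be defined). For $k=1,2,3$ let $b_k(z)=e_k\times z$ for $z\in\mathbb R^3$ ($e_k$ the standard basis, $\times$ the cross product), and let $\tilde b_k(v,w)=\begin{pmatrix} b_k(v-w)\\ -b_k(v-w)\end{pmatrix}\in\mathbb R^6$; $\nabla$ denotes the gradient in $\mathbb R^6$ and $\nabla_v$ the gradient in the $v$ variables. Define $$D_{par}=\frac12\sum_{i,j=1}^3\iint_{\mathbb R^6}\alpha(|v-w|)\,F\,\big|(\partial_{v_i}+\partial_{w_i})(\tilde b_j\cdot\nabla\log F)\big|^2\,\mathrm{d}w\,\mathrm{d}v,$$ $$D_{sph}=\sum_{i,j=1}^3\iint_{\mathbb R^6}\frac{\alpha(|v-w|)}{2|v-w|^2}\,F\,\big|\tilde b_i\cdot\nabla(\tilde b_j\cdot\nabla\log F)\big|^2\,\mathrm{d}w\,\mathrm{d}v.$$ If $F$ is symmetric, i.e. $F(v,w)=F(w,v)$, then $$D_{par}+D_{sph}\ \ge\ \sum_{i,j=1}^3\iint_{\mathbb R^6}\frac{2\alpha(|v-w|)}{|v-w|^2}\,F\,\big|b_i(v-w)\cdot\nabla_v(\tilde b_j\cdot\nabla\log F)\big|^2\,\mathrm{d}w\,\mathrm{d}v.$$ *)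

theory Defs
  imports "HOL-Analysis.Analysis"
begin

definition dd :: "('a::real_normed_vector \<Rightarrow> real) \<Rightarrow> 'a \<Rightarrow> 'a \<Rightarrow> real" where
  "dd h x u = frechet_derivative h (at x) u"

fun Ck :: "nat \<Rightarrow> ('a::real_normed_vector \<Rightarrow> real) \<Rightarrow> bool" where
  "Ck 0 f = continuous_on UNIV f"
| "Ck (Suc k) f = ((\<forall>x. f differentiable (at x)) \<and> (\<forall>u. Ck k (\<lambda>x. frechet_derivative f (at x) u)))"

definition smooth :: "('a::real_normed_vector \<Rightarrow> real) \<Rightarrow> bool" where
  "smooth f = (\<forall>k. Ck k f)"

definition bk :: "3 \<Rightarrow> real^3 \<Rightarrow> real^3" where
  "bk k z = cross3 (axis k 1) z"

definition bt :: "3 \<Rightarrow> (real^3) \<times> (real^3) \<Rightarrow> (real^3) \<times> (real^3)" where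
  "bt k p = (bk k (fst p - snd p), - bk k (fst p - snd p))"

definition gj :: "((real^3) \<times> (real^3) \<Rightarrow> real) \<Rightarrow> 3 \<Rightarrow> (real^3) \<times> (real^3) \<Rightarrow> real" where
  "gj F j x = dd (\<lambda>y. ln (F y)) x (bt j x)"

definition Dpar :: "(real \<Rightarrow> real) \<Rightarrow> ((real^3) \<times> (real^3) \<Rightarrow> real) \<Rightarrow> ennreal" where
  "Dpar \<alpha> F = (1/2) * (\<Sum>i\<in>UNIV. \<Sum>j\<in>UNIV.
     \<integral>\<^sup>+ v. \<integral>\<^sup>+ w. ennreal (\<alpha> (norm (v - w)) * F (v, w) *
        (dd (gj F j) (v, w) (axis i 1, axis i 1))^2) \<partial>lborel \<partial>lborel)"

definition Dsph :: "(real \<Rightarrow> real) \<Rightarrow> ((real^3) \<times> (real^3) \<Rightarrow> real) \<Rightarrow> ennreal" where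
  "Dsph \<alpha> F = (\<Sum>i\<in>UNIV. \<Sum>j\<in>UNIV.
     \<integral>\<^sup>+ v. \<integral>\<^sup>+ w. ennreal (\<alpha> (norm (v - w)) / (2 * (norm (v - w))^2) * F (v, w) *
        (dd (gj F j) (v, w) (bt i (v, w)))^2) \<partial>lborel \<partial>lborel)"

definition Dv :: "(real \<Rightarrow> real) \<Rightarrow> ((real^3) \<times> (real^3) \<Rightarrow> real) \<Rightarrow> ennreal" where
  "Dv \<alpha> F = (\<Sum>i\<in>UNIV. \<Sum>j\<in>UNIV.
     \<integral>\<^sup>+ v. \<integral>\<^sup>+ w. ennreal (2 * \<alpha> (norm (v - w)) / (norm (v - w))^2 * F (v, w) *
        (dd (gj F j) (v, w) (bk i (v - w), 0))^2) \<partial>lborel \<partial>lborel)"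

end

theory Submission
  imports Defs
begin

(* Fix j and write G = g_j, z = v - w, A_i = (b_i(z), 0) . grad G at (v, w), and A'_i for the
   same quantity at (w, v).  Symmetry of F makes G symmetric, so b~_i . grad G = A_i + A'_i and
   A_i - A'_i = b_i(z) . P with P_k = (d_{v_k} + d_{w_k}) G.  As sum_i (b_i(z) . P)^2 = |z x P|^2
   <= |z|^2 |P|^2, the parallelogram law A^2 + A'^2 = ((A + A')^2 + (A - A')^2) / 2 shows that the
   D_v integrand at (v, w) plus the one at (w, v) is at most twice the sum of the D_par and D_sph
   integrands.  Integrating, and using that Lebesgue measure is invariant under (v, w) |-> (w, v),
   gives 2 D_v <= 2 (D_par + D_sph). *)

lemma dd_eq_frechet_derivative: "dd G x = frechet_derivative G (at x)"
  by (simp add: dd_def fun_eq_iff)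

lemma dd_ln:
  fixes F :: "'a::real_normed_vector \<Rightarrow> real"
  assumes "F differentiable at x" and "F x > 0"
  shows "dd (\<lambda>y. ln (F y)) x u = dd F x u / F x"
proof -
  have "(F has_derivative dd F x) (at x)"
    using assms(1) frechet_derivative_works unfolding dd_eq_frechet_derivative by blast
  from frechet_derivative_at[OF has_derivative_ln[OF assms(2) this]]
  show ?thesis
    unfolding dd_def by (metis divide_inverse)
qed

lemma linear_dd: "G differentiable at x \<Longrightarrow> linear (dd G x)"
  using linear_frechet_derivative unfolding dd_eq_frechet_derivative by blast

lemma dd_eq_sum_Basis:
  fixes G :: "'a::euclidean_space \<Rightarrow> real"
  assumes "G differentiable at x"
  shows "dd G x u = (\<Sum>b\<in>Basis. (u \<bullet> b) * dd G x b)"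
proof -
  have "dd G x u = dd G x (\<Sum>b\<in>Basis. (u \<bullet> b) *\<^sub>R b)"
    by (simp add: euclidean_representation)
  also have "\<dots> = (\<Sum>b\<in>Basis. (u \<bullet> b) * dd G x b)"
    using linear_dd[OF assms] by (simp add: linear_sum linear_cmul o_def)
  finally show ?thesis .
qed

lemma dd_swap:
  fixes G :: "'a::real_normed_vector \<times> 'a \<Rightarrow> real"
  assumes "\<And>v w. G (w, v) = G (v, w)" and "G differentiable at (w, v)"
  shows "dd G (v, w) (a, b) = dd G (w, v) (b, a)"
proof -
  let ?L = "dd G (w, v)"
  have G': "(G has_derivative ?L) (at (w, v))"
    using assms(2) frechet_derivative_works unfolding dd_eq_frechet_derivative by blast
  have "((\<lambda>p. (snd p, fst p)) has_derivative (\<lambda>p. (snd p, fst p))) (at (v, w))"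
    by (intro derivative_intros)
  from has_derivative_compose[OF this, of G ?L]
  have "((\<lambda>p. G (snd p, fst p)) has_derivative (\<lambda>p. ?L (snd p, fst p))) (at (v, w))"
    using G' by simp
  moreover have "(\<lambda>p. G (snd p, fst p)) = G"
    using assms(1) by (simp add: fun_eq_iff)
  ultimately have "(G has_derivative (\<lambda>p. ?L (snd p, fst p))) (at (v, w))"
    by simp
  then have "dd G (v, w) = (\<lambda>p. ?L (snd p, fst p))"
    unfolding dd_eq_frechet_derivative by (rule frechet_derivative_at[symmetric])
  then show ?thesis
    by simp
qed

lemma dd_diagonal:
  fixes G :: "(real^'n) \<times> (real^'n) \<Rightarrow> real"
  assumes "G differentiable at x"
  shows "dd G x (y, y) = y \<bullet> (\<chi> k. dd G x (axis k 1, axis k 1))"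
proof -
  have "(y, y) = (\<Sum>k\<in>UNIV. y $ k *\<^sub>R (axis k 1, axis k 1))"
    by (simp add: prod_eq_iff vec_eq_iff fst_sum snd_sum axis_def if_distrib[of "(*) _"] cong: if_cong)
  then have "dd G x (y, y) = (\<Sum>k\<in>UNIV. y $ k * dd G x (axis k 1, axis k 1))"
    using linear_dd[OF assms] by (simp only: linear_sum linear_cmul o_def real_scaleR_def)
  then show ?thesis
    by (simp add: inner_vec_def)
qed

lemma borel_measurable_dd:
  fixes G :: "'a::euclidean_space \<Rightarrow> real"
  assumes "\<And>x. G differentiable at x"
  shows "(\<lambda>x. dd G x u) \<in> borel_measurable borel"
proof (rule borel_measurable_LIMSEQ_real)
  fix x :: 'a
  let ?D = "dd G x"
  have G': "(G has_derivative ?D) (at x)"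
    using assms frechet_derivative_works unfolding dd_eq_frechet_derivative by blast
  have "((\<lambda>t::real. x + t *\<^sub>R u) has_derivative (\<lambda>t. t *\<^sub>R u)) (at 0)"
    by (auto intro!: derivative_eq_intros)
  from has_derivative_compose[OF this, of G ?D]
  have "((\<lambda>t. G (x + t *\<^sub>R u)) has_derivative (\<lambda>t. ?D (t *\<^sub>R u))) (at 0)"
    using G' by simp
  moreover have "(\<lambda>t. ?D (t *\<^sub>R u)) = (*) (?D u)"
    using linear_cmul[OF has_derivative_linear[OF G']] by (simp add: fun_eq_iff mult.commute)
  ultimately have "((\<lambda>t. G (x + t *\<^sub>R u)) has_field_derivative ?D u) (at 0)"
    by (simp add: has_field_derivative_def)
  then have "((\<lambda>t. (G (x + t *\<^sub>R u) - G x) / t) \<longlongrightarrow> ?D u) (at 0)"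
    unfolding has_field_derivative_iff by simp
  moreover have "filterlim (\<lambda>n. inverse (real (Suc n))) (at 0) sequentially"
    by (rule filterlim_atI[OF LIMSEQ_inverse_real_of_nat]) auto
  ultimately show "(\<lambda>n. (G (x + inverse (real (Suc n)) *\<^sub>R u) - G x) / inverse (real (Suc n)))
      \<longlonglongrightarrow> dd G x u"
    using filterlim_compose by blast
next
  fix n
  have "continuous_on UNIV G"
    using assms differentiable_imp_continuous_within continuous_on_eq_continuous_within by blast
  then show "(\<lambda>x. (G (x + inverse (real (Suc n)) *\<^sub>R u) - G x) / inverse (real (Suc n)))
      \<in> borel_measurable borel"
    by (intro borel_measurable_continuous_onI continuous_intros continuous_on_compose2[OF \<open>continuous_on UNIV G\<close>]) auto
qed

lemma dd_field_eq_sum_Basis: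
  fixes G :: "'a::euclidean_space \<Rightarrow> real"
  assumes "\<And>x. G differentiable at x"
  shows "(\<lambda>x. dd G x (u x)) = (\<lambda>x. \<Sum>b\<in>Basis. (u x \<bullet> b) * dd G x b)"
  by (rule ext) (rule dd_eq_sum_Basis[OF assms])

lemma borel_measurable_dd_field:
  fixes G :: "'a::euclidean_space \<Rightarrow> real"
  assumes "\<And>x. G differentiable at x" and "continuous_on UNIV u"
  shows "(\<lambda>x. dd G x (u x)) \<in> borel_measurable borel"
  unfolding dd_field_eq_sum_Basis[OF assms(1)]
proof (intro borel_measurable_sum borel_measurable_times)
  fix b :: 'a
  show "(\<lambda>x. u x \<bullet> b) \<in> borel_measurable borel"
    by (rule borel_measurable_continuous_onI, rule continuous_on_inner[OF assms(2) continuous_on_const])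
  show "(\<lambda>x. dd G x b) \<in> borel_measurable borel"
    by (rule borel_measurable_dd[OF assms(1)])
qed

lemma differentiable_dd_field:
  fixes G :: "'a::euclidean_space \<Rightarrow> real"
  assumes "\<And>x. G differentiable at x" and "\<And>b. (\<lambda>x. dd G x b) differentiable at y"
    and "u differentiable at y"
  shows "(\<lambda>x. dd G x (u x)) differentiable at y"
  unfolding dd_field_eq_sum_Basis[OF assms(1)]
  using assms(2,3) by (intro differentiable_sum differentiable_mult differentiable_inner ballI) simp_all

lemma smooth_differentiable:
  assumes "smooth F"
  shows "F differentiable at x"
proof -
  have "Ck (Suc 0) F"
    using assms unfolding smooth_def by blast
  then show ?thesis
    by (simp only: Ck.simps)
qed

lemma smooth_dd_differentiable:
  assumes "smooth F"
  shows "(\<lambda>x. dd F x u) differentiable at y"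
proof -
  have "Ck (Suc (Suc 0)) F"
    using assms unfolding smooth_def by blast
  then show ?thesis
    unfolding dd_def by (simp only: Ck.simps)
qed

lemma gj_eq:
  assumes "F differentiable at x" and "F x > 0"
  shows "gj F j x = dd F x (bt j x) / F x"
  unfolding gj_def using dd_ln[OF assms] .

lemma linear_bk: "linear (bk j)"
  using bilinear_cross unfolding bilinear_def bk_def[abs_def] by blast

lemma bk_minus_commute: "bk j (w - v) = - bk j (v - w)"
  using linear_neg[OF linear_bk, of j "v - w"] by simp

lemma linear_bt: "linear (bt j)"
  unfolding bt_def[abs_def]
  by (rule linearI) (auto simp: linear_diff[OF linear_bk] linear_add[OF linear_bk]
      linear_cmul[OF linear_bk] algebra_simps)

lemma continuous_on_bt: "continuous_on S (bt j)"
  using linear_bt by (simp add: linear_continuous_on linear_conv_bounded_linear)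

lemma continuous_on_bk_diff_pair: "continuous_on S (\<lambda>p::(real^3) \<times> (real^3). (bk j (fst p - snd p), 0::real^3))"
proof -
  have "linear (\<lambda>p::(real^3) \<times> (real^3). (bk j (fst p - snd p), 0::real^3))"
    by (rule linearI) (auto simp: linear_diff[OF linear_bk] linear_add[OF linear_bk]
        linear_cmul[OF linear_bk] algebra_simps)
  then show ?thesis
    by (simp add: linear_continuous_on linear_conv_bounded_linear)
qed

lemma gj_differentiable:
  assumes "smooth F" and "\<And>x. F x > 0"
  shows "gj F j differentiable at x"
proof -
  have "gj F j = (\<lambda>x. dd F x (bt j x) / F x)"
    using gj_eq smooth_differentiable[OF assms(1)] assms(2) by (simp add: fun_eq_iff)
  moreover have "(\<lambda>x. dd F x (bt j x)) differentiable at x"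
    using smooth_differentiable[OF assms(1)] smooth_dd_differentiable[OF assms(1)]
      linear_imp_differentiable[OF linear_bt]
    by (rule differentiable_dd_field)
  ultimately show ?thesis
    using smooth_differentiable[OF assms(1)] assms(2)[of x]
    by (simp add: differentiable_divide)
qed

lemma gj_swap:
  assumes "smooth F" and "\<And>x. F x > 0" and "\<And>v w. F (v, w) = F (w, v)"
  shows "gj F j (w, v) = gj F j (v, w)"
proof -
  let ?H = "\<lambda>y. ln (F y)"
  have "?H differentiable at x" for x
    using has_derivative_ln[of F x, OF assms(2)] smooth_differentiable[OF assms(1)] frechet_derivative_works
    unfolding differentiable_def by blast
  then have "dd ?H (v, w) (bk j (v - w), - bk j (v - w)) = dd ?H (w, v) (- bk j (v - w), bk j (v - w))"
    using assms(3) by (intro dd_swap) auto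
  then show ?thesis
    by (simp add: gj_def bt_def bk_minus_commute[of j w v])
qed

lemma inner_bk: "bk i z \<bullet> p = (cross3 z p) $ i"
  using exhaust_3[of i] by (auto simp: bk_def cross3_simps axis_def)

lemma sum_inner_bk_square_le: "(\<Sum>i\<in>UNIV. (bk i z \<bullet> p)\<^sup>2) \<le> (norm z * norm p)\<^sup>2"
proof -
  have "(\<Sum>i\<in>UNIV. (bk i z \<bullet> p)\<^sup>2) = cross3 z p \<bullet> cross3 z p"
    unfolding inner_bk by (simp add: inner_vec_def power2_eq_square)
  also have "\<dots> = (norm (cross3 z p))\<^sup>2"
    by (rule power2_norm_eq_inner[symmetric])
  also have "\<dots> \<le> (norm z * norm p)\<^sup>2"
    using norm_cross_dot[of z p] by (metis le_add_same_cancel1 zero_le_power2)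
  finally show ?thesis .
qed

context
  fixes G :: "(real^3) \<times> (real^3) \<Rightarrow> real"
  assumes G_differentiable: "\<And>x. G differentiable at x"
    and G_swap: "\<And>v w. G (w, v) = G (v, w)"
begin

lemma dd_bk_swap: "dd G (w, v) (bk i (w - v), 0) = - dd G (v, w) (0, bk i (v - w))"
proof -
  have "dd G (w, v) (bk i (w - v), 0) = dd G (v, w) (- (0, bk i (v - w)))"
    using dd_swap[OF G_swap G_differentiable, of v w 0] by (simp add: bk_minus_commute[of i w v])
  also have "\<dots> = - dd G (v, w) (0, bk i (v - w))"
    by (rule linear_neg[OF linear_dd[OF G_differentiable]])
  finally show ?thesis .
qed

lemma dd_bt_eq: "dd G (v, w) (bt i (v, w)) = dd G (v, w) (bk i (v - w), 0) + dd G (w, v) (bk i (w - v), 0)"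
proof -
  have "dd G (v, w) (bt i (v, w)) = dd G (v, w) ((bk i (v - w), 0) - (0, bk i (v - w)))"
    by (simp add: bt_def)
  also have "\<dots> = dd G (v, w) (bk i (v - w), 0) - dd G (v, w) (0, bk i (v - w))"
    by (rule linear_diff[OF linear_dd[OF G_differentiable]])
  finally show ?thesis
    by (simp add: dd_bk_swap)
qed

lemma dd_bk_diff:
  "dd G (v, w) (bk i (v - w), 0) - dd G (w, v) (bk i (w - v), 0)
     = bk i (v - w) \<bullet> (\<chi> k. dd G (v, w) (axis k 1, axis k 1))"
proof -
  have "dd G (v, w) (bk i (v - w), 0) + dd G (v, w) (0, bk i (v - w))
      = dd G (v, w) ((bk i (v - w), 0) + (0, bk i (v - w)))"
    by (rule linear_add[OF linear_dd[OF G_differentiable], symmetric])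
  also have "\<dots> = dd G (v, w) (bk i (v - w), bk i (v - w))"
    by simp
  also have "\<dots> = bk i (v - w) \<bullet> (\<chi> k. dd G (v, w) (axis k 1, axis k 1))"
    by (rule dd_diagonal[OF G_differentiable])
  finally show ?thesis
    by (simp add: dd_bk_swap)
qed

lemma sum_dd_bk_square_le:
  "(\<Sum>i\<in>UNIV. (dd G (v, w) (bk i (v - w), 0))\<^sup>2 + (dd G (w, v) (bk i (w - v), 0))\<^sup>2)
     \<le> (\<Sum>i\<in>UNIV. (dd G (v, w) (bt i (v, w)))\<^sup>2) / 2
       + (norm (v - w))\<^sup>2 * (\<Sum>k\<in>UNIV. (dd G (v, w) (axis k 1, axis k 1))\<^sup>2) / 2"
proof -
  define A where "A i = dd G (v, w) (bk i (v - w), 0)" for i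
  define A' where "A' i = dd G (w, v) (bk i (w - v), 0)" for i
  define P where "P = (\<chi> k. dd G (v, w) (axis k 1, axis k 1))"
  have norm_P: "(norm P)\<^sup>2 = (\<Sum>k\<in>UNIV. (dd G (v, w) (axis k 1, axis k 1))\<^sup>2)"
    unfolding P_def power2_norm_eq_inner by (simp add: inner_vec_def power2_eq_square)
  have parallelogram: "(A i)\<^sup>2 + (A' i)\<^sup>2 = ((A i + A' i)\<^sup>2 + (A i - A' i)\<^sup>2) / 2" for i
    by (simp add: power2_eq_square field_simps)
  have "(\<Sum>i\<in>UNIV. (A i)\<^sup>2 + (A' i)\<^sup>2)
      = (\<Sum>i\<in>UNIV. (A i + A' i)\<^sup>2) / 2 + (\<Sum>i\<in>UNIV. (A i - A' i)\<^sup>2) / 2"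
    by (simp only: parallelogram add_divide_distrib[symmetric] sum.distrib[symmetric] sum_divide_distrib)
  also have "\<dots> = (\<Sum>i\<in>UNIV. (dd G (v, w) (bt i (v, w)))\<^sup>2) / 2 + (\<Sum>i\<in>UNIV. (bk i (v - w) \<bullet> P)\<^sup>2) / 2"
    unfolding A_def A'_def P_def dd_bt_eq dd_bk_diff ..
  also have "\<dots> \<le> (\<Sum>i\<in>UNIV. (dd G (v, w) (bt i (v, w)))\<^sup>2) / 2
      + (norm (v - w))\<^sup>2 * (\<Sum>k\<in>UNIV. (dd G (v, w) (axis k 1, axis k 1))\<^sup>2) / 2"
    using sum_inner_bk_square_le[of "v - w" P]
    by (intro add_left_mono divide_right_mono) (simp_all only: power_mult_distrib norm_P zero_le_numeral)
  finally show ?thesis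
    by (simp only: A_def A'_def)
qed

end

lemma nn_integral_lborel_pair:
  fixes H :: "'a::euclidean_space \<times> 'b::euclidean_space \<Rightarrow> ennreal"
  assumes "H \<in> borel_measurable borel"
  shows "(\<integral>\<^sup>+v. \<integral>\<^sup>+w. H (v, w) \<partial>lborel \<partial>lborel) = (\<integral>\<^sup>+p. H p \<partial>lborel)"
proof -
  have "H \<in> borel_measurable (lborel \<Otimes>\<^sub>M lborel)"
    using assms by (simp add: lborel_prod)
  from lborel.nn_integral_fst[OF this] show ?thesis
    by (simp add: lborel_prod)
qed

lemma borel_measurable_swap:
  fixes H :: "'a::euclidean_space \<times> 'b::euclidean_space \<Rightarrow> 'c::topological_space"
  assumes "H \<in> borel_measurable borel"
  shows "(\<lambda>p. H (snd p, fst p)) \<in> borel_measurable borel"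
proof -
  have "continuous_on UNIV (\<lambda>p::'b \<times> 'a. (snd p, fst p))"
    by (intro continuous_intros)
  from measurable_compose[OF borel_measurable_continuous_onI[OF this] assms]
  show ?thesis
    by (simp add: o_def)
qed

lemma nn_integral_lborel_swap:
  fixes H :: "'a::euclidean_space \<times> 'b::euclidean_space \<Rightarrow> ennreal"
  assumes "H \<in> borel_measurable borel"
  shows "(\<integral>\<^sup>+p. H (snd p, fst p) \<partial>lborel) = (\<integral>\<^sup>+p. H p \<partial>lborel)"
proof -
  from nn_integral_lborel_pair[OF borel_measurable_swap[OF assms]]
  have "(\<integral>\<^sup>+p. H (snd p, fst p) \<partial>lborel) = (\<integral>\<^sup>+v. \<integral>\<^sup>+w. H (w, v) \<partial>lborel \<partial>lborel)"
    by simp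
  also have "\<dots> = (\<integral>\<^sup>+w. \<integral>\<^sup>+v. H (w, v) \<partial>lborel \<partial>lborel)"
    using assms by (intro lborel_pair.Fubini) (simp add: lborel_prod)
  also have "\<dots> = (\<integral>\<^sup>+p. H p \<partial>lborel)"
    by (rule nn_integral_lborel_pair[OF assms])
  finally show ?thesis .
qed

lemma nn_integral_lborel_pair_sum:
  fixes f :: "'i \<Rightarrow> 'j \<Rightarrow> 'a::euclidean_space \<Rightarrow> 'b::euclidean_space \<Rightarrow> real"
  assumes "\<And>i j. (\<lambda>p. f i j (fst p) (snd p)) \<in> borel_measurable borel"
    and "\<And>i j v w. 0 \<le> f i j v w"
  shows "(\<Sum>i\<in>I. \<Sum>j\<in>J. \<integral>\<^sup>+v. \<integral>\<^sup>+w. ennreal (f i j v w) \<partial>lborel \<partial>lborel)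
    = (\<integral>\<^sup>+p. ennreal (\<Sum>i\<in>I. \<Sum>j\<in>J. f i j (fst p) (snd p)) \<partial>lborel)"
proof -
  have "(\<Sum>i\<in>I. \<Sum>j\<in>J. \<integral>\<^sup>+v. \<integral>\<^sup>+w. ennreal (f i j v w) \<partial>lborel \<partial>lborel)
      = (\<Sum>i\<in>I. \<Sum>j\<in>J. \<integral>\<^sup>+p. ennreal (f i j (fst p) (snd p)) \<partial>lborel)"
    using nn_integral_lborel_pair[of "\<lambda>p. ennreal (f _ _ (fst p) (snd p))"] assms(1) by simp
  also have "\<dots> = (\<integral>\<^sup>+p. (\<Sum>i\<in>I. \<Sum>j\<in>J. ennreal (f i j (fst p) (snd p))) \<partial>lborel)"
    using assms(1) by (simp add: nn_integral_sum)
  also have "\<dots> = (\<integral>\<^sup>+p. ennreal (\<Sum>i\<in>I. \<Sum>j\<in>J. f i j (fst p) (snd p)) \<partial>lborel)"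
    using assms(2) by (simp add: sum_ennreal sum_nonneg)
  finally show ?thesis .
qed

definition Dpar_density :: "(real \<Rightarrow> real) \<Rightarrow> ((real^3) \<times> (real^3) \<Rightarrow> real) \<Rightarrow> real^3 \<Rightarrow> real^3 \<Rightarrow> real"
  where "Dpar_density \<alpha> F v w = (\<Sum>i\<in>UNIV. \<Sum>j\<in>UNIV.
     \<alpha> (norm (v - w)) * F (v, w) * (dd (gj F j) (v, w) (axis i 1, axis i 1))\<^sup>2)"

definition Dsph_density :: "(real \<Rightarrow> real) \<Rightarrow> ((real^3) \<times> (real^3) \<Rightarrow> real) \<Rightarrow> real^3 \<Rightarrow> real^3 \<Rightarrow> real"
  where "Dsph_density \<alpha> F v w = (\<Sum>i\<in>UNIV. \<Sum>j\<in>UNIV.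
     \<alpha> (norm (v - w)) / (2 * (norm (v - w))\<^sup>2) * F (v, w) * (dd (gj F j) (v, w) (bt i (v, w)))\<^sup>2)"

definition Dv_density :: "(real \<Rightarrow> real) \<Rightarrow> ((real^3) \<times> (real^3) \<Rightarrow> real) \<Rightarrow> real^3 \<Rightarrow> real^3 \<Rightarrow> real"
  where "Dv_density \<alpha> F v w = (\<Sum>i\<in>UNIV. \<Sum>j\<in>UNIV.
     2 * \<alpha> (norm (v - w)) / (norm (v - w))\<^sup>2 * F (v, w) * (dd (gj F j) (v, w) (bk i (v - w), 0))\<^sup>2)"

context
  fixes \<alpha> :: "real \<Rightarrow> real" and F :: "(real^3) \<times> (real^3) \<Rightarrow> real"
  assumes \<alpha>_measurable: "\<alpha> \<in> borel_measurable borel" and \<alpha>_nonneg: "\<And>t. 0 \<le> \<alpha> t"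
    and F_smooth: "smooth F" and F_pos: "\<And>x. 0 < F x"
begin

lemma borel_measurable_integrand_factors [measurable]:
  "(\<lambda>p::(real^3) \<times> (real^3). norm (fst p - snd p)) \<in> borel_measurable borel"
  "(\<lambda>p::(real^3) \<times> (real^3). \<alpha> (norm (fst p - snd p))) \<in> borel_measurable borel"
  "F \<in> borel_measurable borel"
  "(\<lambda>p. dd (gj F j) p (bk i (fst p - snd p), 0)) \<in> borel_measurable borel"
  "(\<lambda>p. dd (gj F j) p (bt i p)) \<in> borel_measurable borel"
  "(\<lambda>p. dd (gj F j) p c) \<in> borel_measurable borel"
proof -
  show "(\<lambda>p::(real^3) \<times> (real^3). norm (fst p - snd p)) \<in> borel_measurable borel"
    by (intro borel_measurable_continuous_onI continuous_intros)
  from measurable_compose[OF this \<alpha>_measurable]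
  show "(\<lambda>p::(real^3) \<times> (real^3). \<alpha> (norm (fst p - snd p))) \<in> borel_measurable borel"
    by simp
  have "continuous_on UNIV F"
    using smooth_differentiable[OF F_smooth] differentiable_imp_continuous_within
      continuous_on_eq_continuous_within by blast
  then show "F \<in> borel_measurable borel"
    by (rule borel_measurable_continuous_onI)
  have G: "\<And>x. gj F j differentiable at x"
    using F_smooth F_pos by (rule gj_differentiable)
  show "(\<lambda>p. dd (gj F j) p (bk i (fst p - snd p), 0)) \<in> borel_measurable borel"
    by (rule borel_measurable_dd_field[OF G continuous_on_bk_diff_pair])
  show "(\<lambda>p. dd (gj F j) p (bt i p)) \<in> borel_measurable borel"
    by (rule borel_measurable_dd_field[OF G continuous_on_bt])
  show "(\<lambda>p. dd (gj F j) p c) \<in> borel_measurable borel"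
    by (rule borel_measurable_dd[OF G])
qed

lemma borel_measurable_densities [measurable]:
  "(\<lambda>p. Dv_density \<alpha> F (fst p) (snd p)) \<in> borel_measurable borel"
  "(\<lambda>p. Dsph_density \<alpha> F (fst p) (snd p)) \<in> borel_measurable borel"
  "(\<lambda>p. Dpar_density \<alpha> F (fst p) (snd p)) \<in> borel_measurable borel"
  by (simp_all only: Dv_density_def Dsph_density_def Dpar_density_def prod.collapse) measurable

lemma Dv_eq_nn_integral: "Dv \<alpha> F = (\<integral>\<^sup>+p. ennreal (Dv_density \<alpha> F (fst p) (snd p)) \<partial>lborel)"
  unfolding Dv_def Dv_density_def
  by (rule nn_integral_lborel_pair_sum)
    (simp only: prod.collapse, measurable,
      auto intro!: mult_nonneg_nonneg divide_nonneg_nonneg \<alpha>_nonneg less_imp_le[OF F_pos])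

lemma Dsph_eq_nn_integral: "Dsph \<alpha> F = (\<integral>\<^sup>+p. ennreal (Dsph_density \<alpha> F (fst p) (snd p)) \<partial>lborel)"
  unfolding Dsph_def Dsph_density_def
  by (rule nn_integral_lborel_pair_sum)
    (simp only: prod.collapse, measurable,
      auto intro!: mult_nonneg_nonneg divide_nonneg_nonneg \<alpha>_nonneg less_imp_le[OF F_pos])

lemma Dpar_eq_nn_integral: "Dpar \<alpha> F = 1/2 * (\<integral>\<^sup>+p. ennreal (Dpar_density \<alpha> F (fst p) (snd p)) \<partial>lborel)"
  unfolding Dpar_def Dpar_density_def
  by (subst nn_integral_lborel_pair_sum)
    (simp only: prod.collapse, measurable, auto intro!: mult_nonneg_nonneg \<alpha>_nonneg less_imp_le[OF F_pos])

lemma Dpar_density_nonneg: "0 \<le> Dpar_density \<alpha> F v w"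
  unfolding Dpar_density_def by (intro sum_nonneg mult_nonneg_nonneg \<alpha>_nonneg less_imp_le[OF F_pos] zero_le_power2)

lemma Dsph_density_nonneg: "0 \<le> Dsph_density \<alpha> F v w"
  unfolding Dsph_density_def
  by (intro sum_nonneg mult_nonneg_nonneg divide_nonneg_nonneg \<alpha>_nonneg less_imp_le[OF F_pos]) simp_all

lemma Dv_density_nonneg: "0 \<le> Dv_density \<alpha> F v w"
  unfolding Dv_density_def
  by (intro sum_nonneg mult_nonneg_nonneg divide_nonneg_nonneg \<alpha>_nonneg less_imp_le[OF F_pos]) simp_all

lemma Dv_density_add_swap:
  assumes F_swap: "\<And>v w. F (v, w) = F (w, v)"
  shows "Dv_density \<alpha> F v w + Dv_density \<alpha> F w v
    = (\<Sum>j\<in>UNIV. 2 * \<alpha> (norm (v - w)) / (norm (v - w))\<^sup>2 * F (v, w) *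
        (\<Sum>i\<in>UNIV. (dd (gj F j) (v, w) (bk i (v - w), 0))\<^sup>2 + (dd (gj F j) (w, v) (bk i (w - v), 0))\<^sup>2))"
proof -
  let ?c = "2 * \<alpha> (norm (v - w)) / (norm (v - w))\<^sup>2 * F (v, w)"
  have "Dv_density \<alpha> F v w = (\<Sum>j\<in>UNIV. \<Sum>i\<in>UNIV. ?c * (dd (gj F j) (v, w) (bk i (v - w), 0))\<^sup>2)"
    unfolding Dv_density_def by (rule sum.swap)
  moreover have "Dv_density \<alpha> F w v = (\<Sum>j\<in>UNIV. \<Sum>i\<in>UNIV. ?c * (dd (gj F j) (w, v) (bk i (w - v), 0))\<^sup>2)"
    unfolding Dv_density_def by (subst sum.swap) (simp add: norm_minus_commute F_swap[of w v])
  ultimately show ?thesis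
    by (simp add: sum.distrib[symmetric] sum_distrib_left distrib_left)
qed

lemma Dv_density_swap_le:
  assumes F_swap: "\<And>v w. F (v, w) = F (w, v)"
  shows "Dv_density \<alpha> F v w + Dv_density \<alpha> F w v \<le> Dpar_density \<alpha> F v w + 2 * Dsph_density \<alpha> F v w"
proof (cases "v = w")
  case True
  then show ?thesis
    using Dpar_density_nonneg Dsph_density_nonneg by (simp add: Dv_density_def)
next
  case False
  define r where "r = (norm (v - w))\<^sup>2"
  define a where "a = \<alpha> (norm (v - w)) * F (v, w)"
  define c where "c = 2 * \<alpha> (norm (v - w)) / r * F (v, w)"
  define S where "S i j = dd (gj F j) (v, w) (bt i (v, w))" for i j
  define P where "P i j = dd (gj F j) (v, w) (axis i 1, axis i 1)" for i j
  have "r > 0"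
    using False by (simp add: r_def)
  have c: "c = 2 * a / r" "0 \<le> c"
    using \<alpha>_nonneg F_pos[of "(v, w)"] \<open>r > 0\<close> by (simp_all add: a_def c_def)
  have "Dv_density \<alpha> F v w + Dv_density \<alpha> F w v
      \<le> (\<Sum>j\<in>UNIV. c * ((\<Sum>i\<in>UNIV. (S i j)\<^sup>2) / 2 + r * (\<Sum>k\<in>UNIV. (P k j)\<^sup>2) / 2))"
    unfolding Dv_density_add_swap[OF F_swap] S_def P_def c_def r_def
    using gj_differentiable[OF F_smooth F_pos] gj_swap[OF F_smooth F_pos F_swap] c(2)[unfolded c_def r_def]
    by (intro sum_mono mult_left_mono sum_dd_bk_square_le)
  also have "\<dots> = (\<Sum>j\<in>UNIV. (\<Sum>i\<in>UNIV. a / r * (S i j)\<^sup>2) + (\<Sum>k\<in>UNIV. a * (P k j)\<^sup>2))"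
  proof (rule sum.cong[OF refl])
    fix j
    have "c * ((\<Sum>i\<in>UNIV. (S i j)\<^sup>2) / 2 + r * (\<Sum>k\<in>UNIV. (P k j)\<^sup>2) / 2)
        = a / r * (\<Sum>i\<in>UNIV. (S i j)\<^sup>2) + a * (\<Sum>k\<in>UNIV. (P k j)\<^sup>2)"
      using \<open>r > 0\<close> by (simp add: c field_simps)
    then show "c * ((\<Sum>i\<in>UNIV. (S i j)\<^sup>2) / 2 + r * (\<Sum>k\<in>UNIV. (P k j)\<^sup>2) / 2)
        = (\<Sum>i\<in>UNIV. a / r * (S i j)\<^sup>2) + (\<Sum>k\<in>UNIV. a * (P k j)\<^sup>2)"
      by (simp add: sum_distrib_left)
  qed
  also have "\<dots> = 2 * Dsph_density \<alpha> F v w + Dpar_density \<alpha> F v w"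
    unfolding sum.distrib Dsph_density_def Dpar_density_def a_def r_def S_def P_def
    by (subst (1 2) sum.swap) (simp add: sum_distrib_left field_simps)
  finally show ?thesis
    by simp
qed

lemma Dv_le_Dpar_plus_Dsph:
  assumes F_swap: "\<And>v w. F (v, w) = F (w, v)"
  shows "Dv \<alpha> F \<le> Dpar \<alpha> F + Dsph \<alpha> F"
proof -
  have "2 * Dv \<alpha> F = (\<integral>\<^sup>+p. ennreal (Dv_density \<alpha> F (fst p) (snd p)) \<partial>lborel)
      + (\<integral>\<^sup>+p. ennreal (Dv_density \<alpha> F (snd p) (fst p)) \<partial>lborel)"
    using nn_integral_lborel_swap[of "\<lambda>p. ennreal (Dv_density \<alpha> F (fst p) (snd p))"]
    by (simp add: Dv_eq_nn_integral mult_2)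
  also have "\<dots> = (\<integral>\<^sup>+p. ennreal (Dv_density \<alpha> F (fst p) (snd p) + Dv_density \<alpha> F (snd p) (fst p)) \<partial>lborel)"
    using Dv_density_nonneg borel_measurable_swap[OF borel_measurable_densities(1)]
    by (simp add: nn_integral_add ennreal_plus)
  also have "\<dots> \<le> (\<integral>\<^sup>+p. ennreal (Dpar_density \<alpha> F (fst p) (snd p) + 2 * Dsph_density \<alpha> F (fst p) (snd p)) \<partial>lborel)"
    by (intro nn_integral_mono ennreal_leI Dv_density_swap_le[OF F_swap])
  also have "\<dots> = (\<integral>\<^sup>+p. ennreal (Dpar_density \<alpha> F (fst p) (snd p)) \<partial>lborel)
      + 2 * (\<integral>\<^sup>+p. ennreal (Dsph_density \<alpha> F (fst p) (snd p)) \<partial>lborel)"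
    using Dpar_density_nonneg Dsph_density_nonneg
    by (simp add: nn_integral_add nn_integral_cmult ennreal_plus ennreal_mult)
  also have "\<dots> = 2 * (Dpar \<alpha> F + Dsph \<alpha> F)"
    by (simp add: Dpar_eq_nn_integral Dsph_eq_nn_integral distrib_left mult.assoc[symmetric]
        ennreal_times_divide)
  finally show ?thesis
    by (subst (asm) ennreal_mult_le_mult_iff) simp_all
qed

end

lemma borel_measurable_restrict_pos:
  fixes \<alpha> :: "real \<Rightarrow> real"
  assumes "continuous_on {0<..} \<alpha>"
  shows "(\<lambda>t. if 0 < t then \<alpha> t else 0) \<in> borel_measurable borel"
proof -
  have "(\<lambda>t. indicator {0<..} t *\<^sub>R \<alpha> t) \<in> borel_measurable borel"
    using assms by (rule borel_measurable_continuous_on_indicator[rotated]) simp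
  moreover have "(\<lambda>t. indicator {0<..} t *\<^sub>R \<alpha> t) = (\<lambda>t. if 0 < t then \<alpha> t else 0)"
    by (simp add: fun_eq_iff indicator_def)
  ultimately show ?thesis
    by simp
qed

(* \<alpha> is only constrained on (0, \<infinity>).  Cutting it off to 0 elsewhere leaves D_v and D_sph unchanged,
   because their integrands vanish on the diagonal v = w (division by |v - w|^2 = 0 yields 0),
   and can only decrease D_par. *)
lemma Dv_restrict_pos: "Dv (\<lambda>t. if 0 < t then \<alpha> t else 0) F = Dv \<alpha> F"
proof -
  have cutoff: "2 * (if 0 < norm z then \<alpha> (norm z) else 0) / (norm z)\<^sup>2 = 2 * \<alpha> (norm z) / (norm z)\<^sup>2"
    for z :: "real^3"
    by (cases "z = 0") simp_all
  show ?thesis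
    unfolding Dv_def cutoff ..
qed

lemma Dsph_restrict_pos: "Dsph (\<lambda>t. if 0 < t then \<alpha> t else 0) F = Dsph \<alpha> F"
proof -
  have cutoff: "(if 0 < norm z then \<alpha> (norm z) else 0) / (2 * (norm z)\<^sup>2) = \<alpha> (norm z) / (2 * (norm z)\<^sup>2)"
    for z :: "real^3"
    by (cases "z = 0") simp_all
  show ?thesis
    unfolding Dsph_def cutoff ..
qed

lemma Dpar_restrict_pos_le: "Dpar (\<lambda>t. if 0 < t then \<alpha> t else 0) F \<le> Dpar \<alpha> F"
proof -
  have cutoff: "ennreal ((if 0 < t then \<alpha> t else 0) * c * d) \<le> ennreal (\<alpha> t * c * d)" for t c d
    by (cases "0 < t") simp_all
  show ?thesis
    unfolding Dpar_def by (intro mult_left_mono sum_mono nn_integral_mono cutoff) simp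
qed

theorem lemma3p3:
  fixes \<alpha> :: "real \<Rightarrow> real" and F :: "(real^3) \<times> (real^3) \<Rightarrow> real"
  assumes "\<alpha> differentiable_on {0<..}"
    and "\<And>t. t > 0 \<Longrightarrow> \<alpha> t \<ge> 0"
    and "smooth F"
    and "\<And>x. F x > 0"
    and "\<And>v w. F (v, w) = F (w, v)"
  shows "Dpar \<alpha> F + Dsph \<alpha> F \<ge> Dv \<alpha> F"
proof -
  define \<alpha>' where "\<alpha>' = (\<lambda>t. if 0 < t then \<alpha> t else 0)"
  have "\<alpha>' \<in> borel_measurable borel"
    unfolding \<alpha>'_def using differentiable_imp_continuous_on[OF assms(1)]
    by (rule borel_measurable_restrict_pos)
  moreover have "\<And>t. 0 \<le> \<alpha>' t"
    using assms(2) by (simp add: \<alpha>'_def)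
  ultimately have "Dv \<alpha>' F \<le> Dpar \<alpha>' F + Dsph \<alpha>' F"
    using assms(3-5) by (rule Dv_le_Dpar_plus_Dsph)
  also have "\<dots> \<le> Dpar \<alpha> F + Dsph \<alpha> F"
    unfolding \<alpha>'_def Dsph_restrict_pos by (rule add_right_mono[OF Dpar_restrict_pos_le])
  finally show ?thesis
    unfolding \<alpha>'_def Dv_restrict_pos .
qed

end
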